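(* Let $\mathbf G_*=(\partial:G_1\to G_0)$ be a crossed module. The homomorphism $\delta:G_1\to\mathbf Z_0(\mathbf G_* )$ together with the bracket $\{(x,\xi),(y,\eta)\}:=\xi(y)$ is a braided crossed module, whose associated crossed module (with action ${}^{(x,\xi)}a:=\{(x,\xi),\delta a\}\,a$) is the crossed module $\delta:G_1\to\mathbf Z_0(\mathbf G_* )$ with action ${}^{(x,\xi)}a={}^xa$. This braided crossed module is denoted $\mathbf Z_*(\mathbf G_* )$ and called the centre of $\mathbf G_*$.
   Context: A crossed module $\mathbf G_*$: groups $G_1,G_0$, a homomorphism $\partial:G_1\to G_0$ and a left action $(x,a)\mapsto{}^xa$ of $G_0$ on $G_1$ by automorphisms, with $\partial({}^x a)=x\partial(a)x^{-1}$ and ${}^{\partial(b)}a=bab^{-1}$. Commutators $[x,y]=xyx^{-1}y^{-1}$. A braided crossed module is a group homomorphism $\partial:H_1\to H_0$ with a map $\{-,-\}:H_0\times H_0\to H_1$ such that for all $x,y,z\in H_0$, $a,b\in H_1$: $\partial\{x,y\}=[x,y]$; $\{\partial a,\partial b\}=[a,b]$; $\{\partial a,x\}=\{x,\partial a\}^{-1}$; $\{x,yz\}=\{x,y\}\{x,z\}\{zxz^{-1}x^{-1},y\}$; $\{xy,z\}=\{x,yzy^{-1}\}\{y,z\}$. $\mathbf Z_0(\mathbf G_* )$ is the set of pairs $(x,\xi)$, $x\in G_0$, $\xi:G_0\to G_1$ a map, with (Z1) $\partial\xi(t)=[x,t]$, (Z2) $\xi(\partial a)={}^xa\,a^{-1}$,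 (Z3) $\xi(st)=\xi(s)\,{}^s\xi(t)$ for all $s,t\in G_0$, $a\in G_1$; it is a group under $(x,\xi)(y,\eta)=(xy,\ t\mapsto{}^x\eta(t)\,\xi(t))$. $\delta(c)=(\partial c,\ t\mapsto c\,({}^tc)^{-1})$. *)

theory Defs
  imports "HOL-Algebra.Algebra"
begin

definition commut :: "('a, 'm) monoid_scheme \<Rightarrow> 'a \<Rightarrow> 'a \<Rightarrow> 'a" where
  "commut G x y = x \<otimes>\<^bsub>G\<^esub> y \<otimes>\<^bsub>G\<^esub> inv\<^bsub>G\<^esub> x \<otimes>\<^bsub>G\<^esub> inv\<^bsub>G\<^esub> y"

definition crossed_module ::
  "('a, 'm) monoid_scheme \<Rightarrow> ('b, 'n) monoid_scheme \<Rightarrow> ('a \<Rightarrow> 'b) \<Rightarrow> ('b \<Rightarrow> 'a \<Rightarrow> 'a) \<Rightarrow> bool" where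
  "crossed_module G1 G0 d act \<longleftrightarrow>
     group G1 \<and> group G0 \<and> d \<in> hom G1 G0 \<and>
     (\<forall>x\<in>carrier G0. \<forall>a\<in>carrier G1. act x a \<in> carrier G1) \<and>
     (\<forall>x\<in>carrier G0. \<forall>a\<in>carrier G1. \<forall>b\<in>carrier G1.
        act x (a \<otimes>\<^bsub>G1\<^esub> b) = act x a \<otimes>\<^bsub>G1\<^esub> act x b) \<and>
     (\<forall>a\<in>carrier G1. act \<one>\<^bsub>G0\<^esub> a = a) \<and>
     (\<forall>x\<in>carrier G0. \<forall>y\<in>carrier G0. \<forall>a\<in>carrier G1.
        act (x \<otimes>\<^bsub>G0\<^esub> y) a = act x (act y a)) \<and>
     (\<forall>x\<in>carrier G0. \<forall>a\<in>carrier G1.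
        d (act x a) = x \<otimes>\<^bsub>G0\<^esub> d a \<otimes>\<^bsub>G0\<^esub> inv\<^bsub>G0\<^esub> x) \<and>
     (\<forall>a\<in>carrier G1. \<forall>b\<in>carrier G1.
        act (d b) a = b \<otimes>\<^bsub>G1\<^esub> a \<otimes>\<^bsub>G1\<^esub> inv\<^bsub>G1\<^esub> b)"

definition braided_crossed_module ::
  "('a, 'm) monoid_scheme \<Rightarrow> ('b, 'n) monoid_scheme \<Rightarrow> ('a \<Rightarrow> 'b) \<Rightarrow> ('b \<Rightarrow> 'b \<Rightarrow> 'a) \<Rightarrow> bool" where
  "braided_crossed_module H1 H0 d br \<longleftrightarrow>
     group H1 \<and> group H0 \<and> d \<in> hom H1 H0 \<and>
     (\<forall>x\<in>carrier H0. \<forall>y\<in>carrier H0. br x y \<in> carrier H1) \<and>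
     (\<forall>x\<in>carrier H0. \<forall>y\<in>carrier H0. d (br x y) = commut H0 x y) \<and>
     (\<forall>a\<in>carrier H1. \<forall>b\<in>carrier H1. br (d a) (d b) = commut H1 a b) \<and>
     (\<forall>a\<in>carrier H1. \<forall>x\<in>carrier H0. br (d a) x = inv\<^bsub>H1\<^esub> (br x (d a))) \<and>
     (\<forall>x\<in>carrier H0. \<forall>y\<in>carrier H0. \<forall>z\<in>carrier H0.
        br x (y \<otimes>\<^bsub>H0\<^esub> z) =
          br x y \<otimes>\<^bsub>H1\<^esub> br x z \<otimes>\<^bsub>H1\<^esub>
          br (z \<otimes>\<^bsub>H0\<^esub> x \<otimes>\<^bsub>H0\<^esub> inv\<^bsub>H0\<^esub> z \<otimes>\<^bsub>H0\<^esub> inv\<^bsub>H0\<^esub> x) y) \<and>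
     (\<forall>x\<in>carrier H0. \<forall>y\<in>carrier H0. \<forall>z\<in>carrier H0.
        br (x \<otimes>\<^bsub>H0\<^esub> y) z =
          br x (y \<otimes>\<^bsub>H0\<^esub> z \<otimes>\<^bsub>H0\<^esub> inv\<^bsub>H0\<^esub> y) \<otimes>\<^bsub>H1\<^esub> br y z)"

text \<open>Maps \<open>\<xi> : G0 \<rightarrow> G1\<close> are represented as extensional functions
  on \<open>carrier G0\<close> (value \<open>undefined\<close> outside), so that equality of pairs is equality of maps.\<close>
definition Z0_carrier ::
  "('a, 'm) monoid_scheme \<Rightarrow> ('b, 'n) monoid_scheme \<Rightarrow> ('a \<Rightarrow> 'b) \<Rightarrow> ('b \<Rightarrow> 'a \<Rightarrow> 'a)
   \<Rightarrow> ('b \<times> ('b \<Rightarrow> 'a)) set" where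
  "Z0_carrier G1 G0 d act =
     {(x, \<xi>). x \<in> carrier G0 \<and> \<xi> \<in> carrier G0 \<rightarrow>\<^sub>E carrier G1 \<and>
        (\<forall>t\<in>carrier G0. d (\<xi> t) = commut G0 x t) \<and>
        (\<forall>a\<in>carrier G1. \<xi> (d a) = act x a \<otimes>\<^bsub>G1\<^esub> inv\<^bsub>G1\<^esub> a) \<and>
        (\<forall>s\<in>carrier G0. \<forall>t\<in>carrier G0.
           \<xi> (s \<otimes>\<^bsub>G0\<^esub> t) = \<xi> s \<otimes>\<^bsub>G1\<^esub> act s (\<xi> t))}"

definition Z0 ::
  "('a, 'm) monoid_scheme \<Rightarrow> ('b, 'n) monoid_scheme \<Rightarrow> ('a \<Rightarrow> 'b) \<Rightarrow> ('b \<Rightarrow> 'a \<Rightarrow> 'a)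
   \<Rightarrow> ('b \<times> ('b \<Rightarrow> 'a)) monoid" where
  "Z0 G1 G0 d act =
     \<lparr> carrier = Z0_carrier G1 G0 d act,
       monoid.mult = (\<lambda>(x, \<xi>) (y, \<eta>). (x \<otimes>\<^bsub>G0\<^esub> y,
                  \<lambda>t\<in>carrier G0. act x (\<eta> t) \<otimes>\<^bsub>G1\<^esub> \<xi> t)),
       one = (\<one>\<^bsub>G0\<^esub>, \<lambda>t\<in>carrier G0. \<one>\<^bsub>G1\<^esub>) \<rparr>"

definition Z0_delta ::
  "('a, 'm) monoid_scheme \<Rightarrow> ('b, 'n) monoid_scheme \<Rightarrow> ('a \<Rightarrow> 'b) \<Rightarrow> ('b \<Rightarrow> 'a \<Rightarrow> 'a)
   \<Rightarrow> 'a \<Rightarrow> 'b \<times> ('b \<Rightarrow> 'a)" where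
  "Z0_delta G1 G0 d act c = (d c, \<lambda>t\<in>carrier G0. c \<otimes>\<^bsub>G1\<^esub> inv\<^bsub>G1\<^esub> (act t c))"

definition Z0_bracket :: "'b \<times> ('b \<Rightarrow> 'a) \<Rightarrow> 'b \<times> ('b \<Rightarrow> 'a) \<Rightarrow> 'a" where
  "Z0_bracket p q = snd p (fst q)"

end

theory Submission
  imports Defs
begin

text \<open>For \<open>(x, \<xi>) \<in> Z\<^sub>0\<close> the map \<open>\<xi>\<close> is a crossed homomorphism (Z3) whose boundary is
  \<open>s \<mapsto> [x, s]\<close> (Z1).  Combined with the Peiffer identity this gives the swap rule
  \<open>\<xi> s \<cdot> act g w = act ([x, s] g) w \<cdot> \<xi> s\<close>, which is what makes \<open>Z\<^sub>0\<close> closed under products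
  and inverses and \<open>\<delta>\<close> equivariant.  The key identity \<open>\<delta>(\<xi> y) = [(x, \<xi>), (y, \<eta>)]\<close> is checked
  pointwise at \<open>t\<close>: writing \<open>y t = \<partial>(\<eta> t) \<cdot> t y\<close> and using (Z2) in the form
  \<open>\<xi>(\<partial> b) \<cdot> b = act x b\<close>, both sides reduce to \<open>act x (\<eta> t) \<cdot> \<xi> t\<close>.\<close>

lemma (in group) mult_inv_cancel_left [simp]:
  "a \<in> carrier G \<Longrightarrow> b \<in> carrier G \<Longrightarrow> a \<otimes> (inv a \<otimes> b) = b"
  by (simp add: m_assoc[symmetric])

lemma (in group) inv_mult_cancel_left [simp]:
  "a \<in> carrier G \<Longrightarrow> b \<in> carrier G \<Longrightarrow> inv a \<otimes> (a \<otimes> b) = b"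
  by (simp add: m_assoc[symmetric])

lemma (in group) commut_closed [simp]:
  "p \<in> carrier G \<Longrightarrow> q \<in> carrier G \<Longrightarrow> commut G p q \<in> carrier G"
  by (simp add: commut_def)

lemma (in group) inv_commut:
  "p \<in> carrier G \<Longrightarrow> q \<in> carrier G \<Longrightarrow> inv (commut G p q) = commut G q p"
  by (simp add: commut_def m_assoc inv_mult_group)

lemma (in group) commut_mult_swap:
  "p \<in> carrier G \<Longrightarrow> q \<in> carrier G \<Longrightarrow> commut G p q \<otimes> (q \<otimes> p) = p \<otimes> q"
  by (simp add: commut_def m_assoc)

lemma (in group) eq_commut_of_mult:
  assumes "A \<in> carrier G" "p \<in> carrier G" "q \<in> carrier G" "A \<otimes> (q \<otimes> p) = p \<otimes> q"
  shows "A = commut G p q"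
proof -
  have "A = A \<otimes> (q \<otimes> p) \<otimes> inv (q \<otimes> p)" using assms(1-3) by (simp add: m_assoc)
  also have "\<dots> = p \<otimes> q \<otimes> inv (q \<otimes> p)" using assms(4) by simp
  finally show ?thesis using assms by (simp add: commut_def m_assoc inv_mult_group)
qed

lemma (in group) eq_conj_of_mult:
  assumes "A \<in> carrier G" "p \<in> carrier G" "B \<in> carrier G" "A \<otimes> p = p \<otimes> B"
  shows "A = p \<otimes> B \<otimes> inv p"
  using assms by (metis inv_closed m_closed inv_solve_right)

locale xmod = G1: group G1 + G0: group G0
  for G1 :: "('a, 'm) monoid_scheme" and G0 :: "('b, 'n) monoid_scheme" +
  fixes d :: "'a \<Rightarrow> 'b" and act :: "'b \<Rightarrow> 'a \<Rightarrow> 'a"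
  assumes crossed: "crossed_module G1 G0 d act"
begin

lemma d_group_hom: "group_hom G1 G0 d"
  using crossed unfolding crossed_module_def group_hom_def group_hom_axioms_def by blast

lemma d_closed [simp]: "a \<in> carrier G1 \<Longrightarrow> d a \<in> carrier G0"
  by (rule group_hom.hom_closed[OF d_group_hom])

lemma d_mult [simp]: "a \<in> carrier G1 \<Longrightarrow> b \<in> carrier G1 \<Longrightarrow> d (a \<otimes>\<^bsub>G1\<^esub> b) = d a \<otimes>\<^bsub>G0\<^esub> d b"
  by (rule group_hom.hom_mult[OF d_group_hom])

lemma d_one [simp]: "d \<one>\<^bsub>G1\<^esub> = \<one>\<^bsub>G0\<^esub>"
  by (rule group_hom.hom_one[OF d_group_hom])

lemma d_inv [simp]: "a \<in> carrier G1 \<Longrightarrow> d (inv\<^bsub>G1\<^esub> a) = inv\<^bsub>G0\<^esub> (d a)"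
  by (rule group_hom.hom_inv[OF d_group_hom])

lemma act_closed [simp]: "x \<in> carrier G0 \<Longrightarrow> a \<in> carrier G1 \<Longrightarrow> act x a \<in> carrier G1"
  using crossed unfolding crossed_module_def by blast

lemma act_mult [simp]: "x \<in> carrier G0 \<Longrightarrow> a \<in> carrier G1 \<Longrightarrow> b \<in> carrier G1 \<Longrightarrow>
   act x (a \<otimes>\<^bsub>G1\<^esub> b) = act x a \<otimes>\<^bsub>G1\<^esub> act x b"
  using crossed unfolding crossed_module_def by blast

lemma act_one [simp]: "a \<in> carrier G1 \<Longrightarrow> act \<one>\<^bsub>G0\<^esub> a = a"
  using crossed unfolding crossed_module_def by blast

lemma act_act [simp]: "x \<in> carrier G0 \<Longrightarrow> y \<in> carrier G0 \<Longrightarrow> a \<in> carrier G1 \<Longrightarrow>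
   act x (act y a) = act (x \<otimes>\<^bsub>G0\<^esub> y) a"
  using crossed unfolding crossed_module_def by metis

lemma d_act [simp]: "x \<in> carrier G0 \<Longrightarrow> a \<in> carrier G1 \<Longrightarrow>
   d (act x a) = x \<otimes>\<^bsub>G0\<^esub> d a \<otimes>\<^bsub>G0\<^esub> inv\<^bsub>G0\<^esub> x"
  using crossed unfolding crossed_module_def by blast

lemma act_d: "a \<in> carrier G1 \<Longrightarrow> b \<in> carrier G1 \<Longrightarrow>
   act (d b) a = b \<otimes>\<^bsub>G1\<^esub> a \<otimes>\<^bsub>G1\<^esub> inv\<^bsub>G1\<^esub> b"
  using crossed unfolding crossed_module_def by blast

lemma act_one_right [simp]: "x \<in> carrier G0 \<Longrightarrow> act x \<one>\<^bsub>G1\<^esub> = \<one>\<^bsub>G1\<^esub>"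
  using act_mult[of x "\<one>\<^bsub>G1\<^esub>" "\<one>\<^bsub>G1\<^esub>"] by simp

lemma act_inv [simp]: "x \<in> carrier G0 \<Longrightarrow> a \<in> carrier G1 \<Longrightarrow>
   act x (inv\<^bsub>G1\<^esub> a) = inv\<^bsub>G1\<^esub> (act x a)"
  using act_mult[of x "inv\<^bsub>G1\<^esub> a" a] by (simp add: G1.inv_equality)

lemma peiffer_swap: "u \<in> carrier G1 \<Longrightarrow> g \<in> carrier G0 \<Longrightarrow> w \<in> carrier G1 \<Longrightarrow>
   u \<otimes>\<^bsub>G1\<^esub> act g w = act (d u \<otimes>\<^bsub>G0\<^esub> g) w \<otimes>\<^bsub>G1\<^esub> u"
  by (simp add: act_d G1.m_assoc flip: act_act)

abbreviation Z where "Z \<equiv> Z0 G1 G0 d act"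

lemma Z0_mem_iff: "(x, \<xi>) \<in> carrier Z \<longleftrightarrow> x \<in> carrier G0 \<and> \<xi> \<in> carrier G0 \<rightarrow>\<^sub>E carrier G1 \<and>
        (\<forall>t\<in>carrier G0. d (\<xi> t) = commut G0 x t) \<and>
        (\<forall>a\<in>carrier G1. \<xi> (d a) = act x a \<otimes>\<^bsub>G1\<^esub> inv\<^bsub>G1\<^esub> a) \<and>
        (\<forall>s\<in>carrier G0. \<forall>t\<in>carrier G0.
           \<xi> (s \<otimes>\<^bsub>G0\<^esub> t) = \<xi> s \<otimes>\<^bsub>G1\<^esub> act s (\<xi> t))"
  by (simp add: Z0_def Z0_carrier_def)

lemma Z0_mult: "(x, \<xi>) \<otimes>\<^bsub>Z\<^esub> (y, \<eta>) = (x \<otimes>\<^bsub>G0\<^esub> y, \<lambda>t\<in>carrier G0. act x (\<eta> t) \<otimes>\<^bsub>G1\<^esub> \<xi> t)"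
  by (simp add: Z0_def)

lemma Z0_one: "\<one>\<^bsub>Z\<^esub> = (\<one>\<^bsub>G0\<^esub>, \<lambda>t\<in>carrier G0. \<one>\<^bsub>G1\<^esub>)"
  by (simp add: Z0_def)

context
  fixes x \<xi> assumes mem: "(x, \<xi>) \<in> carrier Z"
begin

lemma Z0_fst_closed [simp]: "x \<in> carrier G0"
  using mem by (simp add: Z0_mem_iff)

lemma Z0_extensional: "\<xi> \<in> extensional (carrier G0)"
  using mem by (simp add: Z0_mem_iff PiE_iff)

lemma Z0_apply_closed [simp]: "t \<in> carrier G0 \<Longrightarrow> \<xi> t \<in> carrier G1"
  using mem by (auto simp: Z0_mem_iff)

lemma Z0_d_apply [simp]: "t \<in> carrier G0 \<Longrightarrow> d (\<xi> t) = commut G0 x t"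
  using mem by (simp add: Z0_mem_iff)

lemma Z0_apply_d [simp]: "a \<in> carrier G1 \<Longrightarrow> \<xi> (d a) = act x a \<otimes>\<^bsub>G1\<^esub> inv\<^bsub>G1\<^esub> a"
  using mem by (simp add: Z0_mem_iff)

lemma Z0_apply_mult [simp]: "s \<in> carrier G0 \<Longrightarrow> t \<in> carrier G0 \<Longrightarrow>
   \<xi> (s \<otimes>\<^bsub>G0\<^esub> t) = \<xi> s \<otimes>\<^bsub>G1\<^esub> act s (\<xi> t)"
  using mem by (simp add: Z0_mem_iff)

lemma Z0_apply_d_mult: "b \<in> carrier G1 \<Longrightarrow> s \<in> carrier G0 \<Longrightarrow>
   \<xi> (d b \<otimes>\<^bsub>G0\<^esub> s) \<otimes>\<^bsub>G1\<^esub> b = act x b \<otimes>\<^bsub>G1\<^esub> \<xi> s"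
  by (simp add: act_d G1.m_assoc)

lemma Z0_swap: "s \<in> carrier G0 \<Longrightarrow> g \<in> carrier G0 \<Longrightarrow> w \<in> carrier G1 \<Longrightarrow>
   \<xi> s \<otimes>\<^bsub>G1\<^esub> act g w = act (commut G0 x s \<otimes>\<^bsub>G0\<^esub> g) w \<otimes>\<^bsub>G1\<^esub> \<xi> s"
  using peiffer_swap[of "\<xi> s" g w] by simp

end

lemma Z0_mult_closed:
  assumes p: "(x, \<xi>) \<in> carrier Z" and q: "(y, \<eta>) \<in> carrier Z"
  shows "(x, \<xi>) \<otimes>\<^bsub>Z\<^esub> (y, \<eta>) \<in> carrier Z"
  unfolding Z0_mult Z0_mem_iff
proof (intro conjI ballI)
  show "x \<otimes>\<^bsub>G0\<^esub> y \<in> carrier G0" using p q by simp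
  show "(\<lambda>t\<in>carrier G0. act x (\<eta> t) \<otimes>\<^bsub>G1\<^esub> \<xi> t) \<in> carrier G0 \<rightarrow>\<^sub>E carrier G1"
    using p q by simp
next
  fix t assume "t \<in> carrier G0"
  then show "d ((\<lambda>t\<in>carrier G0. act x (\<eta> t) \<otimes>\<^bsub>G1\<^esub> \<xi> t) t) = commut G0 (x \<otimes>\<^bsub>G0\<^esub> y) t"
    using p q by (simp add: commut_def G0.m_assoc G0.inv_mult_group)
next
  fix c assume "c \<in> carrier G1"
  then show "(\<lambda>t\<in>carrier G0. act x (\<eta> t) \<otimes>\<^bsub>G1\<^esub> \<xi> t) (d c) =
      act (x \<otimes>\<^bsub>G0\<^esub> y) c \<otimes>\<^bsub>G1\<^esub> inv\<^bsub>G1\<^esub> c"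
    using p q by (simp add: G1.m_assoc G1.inv_mult_group)
next
  fix s t assume s: "s \<in> carrier G0" and t: "t \<in> carrier G0"
  have swap: "act (x \<otimes>\<^bsub>G0\<^esub> s) (\<eta> t) \<otimes>\<^bsub>G1\<^esub> \<xi> s = \<xi> s \<otimes>\<^bsub>G1\<^esub> act (s \<otimes>\<^bsub>G0\<^esub> x) (\<eta> t)"
    using Z0_swap[OF p s _ Z0_apply_closed[OF q t], of "s \<otimes>\<^bsub>G0\<^esub> x"] p s
    by (simp add: G0.commut_mult_swap)
  have "act x (\<eta> (s \<otimes>\<^bsub>G0\<^esub> t)) \<otimes>\<^bsub>G1\<^esub> \<xi> (s \<otimes>\<^bsub>G0\<^esub> t) =
      act x (\<eta> s) \<otimes>\<^bsub>G1\<^esub> (act (x \<otimes>\<^bsub>G0\<^esub> s) (\<eta> t) \<otimes>\<^bsub>G1\<^esub> \<xi> s) \<otimes>\<^bsub>G1\<^esub> act s (\<xi> t)"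
    using p q s t by (simp add: G1.m_assoc)
  also have "\<dots> = act x (\<eta> s) \<otimes>\<^bsub>G1\<^esub> \<xi> s \<otimes>\<^bsub>G1\<^esub> act s (act x (\<eta> t) \<otimes>\<^bsub>G1\<^esub> \<xi> t)"
    unfolding swap using p q s t by (simp add: G1.m_assoc)
  finally show "(\<lambda>t\<in>carrier G0. act x (\<eta> t) \<otimes>\<^bsub>G1\<^esub> \<xi> t) (s \<otimes>\<^bsub>G0\<^esub> t) =
      (\<lambda>t\<in>carrier G0. act x (\<eta> t) \<otimes>\<^bsub>G1\<^esub> \<xi> t) s \<otimes>\<^bsub>G1\<^esub>
      act s ((\<lambda>t\<in>carrier G0. act x (\<eta> t) \<otimes>\<^bsub>G1\<^esub> \<xi> t) t)"
    using s t by simp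
qed

lemma Z0_one_closed: "\<one>\<^bsub>Z\<^esub> \<in> carrier Z"
  unfolding Z0_one Z0_mem_iff by (simp add: commut_def)

definition Z0_inverse :: "'b \<Rightarrow> ('b \<Rightarrow> 'a) \<Rightarrow> 'b \<times> ('b \<Rightarrow> 'a)" where
  "Z0_inverse x \<xi> = (inv\<^bsub>G0\<^esub> x, \<lambda>t\<in>carrier G0. act (inv\<^bsub>G0\<^esub> x) (inv\<^bsub>G1\<^esub> (\<xi> t)))"

lemma Z0_inverse_mult: "(x, \<xi>) \<in> carrier Z \<Longrightarrow> Z0_inverse x \<xi> \<otimes>\<^bsub>Z\<^esub> (x, \<xi>) = \<one>\<^bsub>Z\<^esub>"
  by (auto simp: Z0_inverse_def Z0_mult Z0_one fun_eq_iff)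

lemma Z0_inverse_closed:
  assumes p: "(x, \<xi>) \<in> carrier Z"
  shows "Z0_inverse x \<xi> \<in> carrier Z"
  unfolding Z0_inverse_def Z0_mem_iff
proof (intro conjI ballI)
  show "inv\<^bsub>G0\<^esub> x \<in> carrier G0" using p by simp
  show "(\<lambda>t\<in>carrier G0. act (inv\<^bsub>G0\<^esub> x) (inv\<^bsub>G1\<^esub> (\<xi> t))) \<in> carrier G0 \<rightarrow>\<^sub>E carrier G1"
    using p by simp
next
  fix t assume "t \<in> carrier G0"
  then show "d ((\<lambda>t\<in>carrier G0. act (inv\<^bsub>G0\<^esub> x) (inv\<^bsub>G1\<^esub> (\<xi> t))) t) = commut G0 (inv\<^bsub>G0\<^esub> x) t"
    using p by (simp add: commut_def G0.m_assoc G0.inv_mult_group)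
next
  fix c assume "c \<in> carrier G1"
  then show "(\<lambda>t\<in>carrier G0. act (inv\<^bsub>G0\<^esub> x) (inv\<^bsub>G1\<^esub> (\<xi> t))) (d c) =
      act (inv\<^bsub>G0\<^esub> x) c \<otimes>\<^bsub>G1\<^esub> inv\<^bsub>G1\<^esub> c"
    using p by (simp add: G1.m_assoc G1.inv_mult_group)
next
  fix s t assume s: "s \<in> carrier G0" and t: "t \<in> carrier G0"
  let ?x = "inv\<^bsub>G0\<^esub> x" and ?w = "inv\<^bsub>G1\<^esub> (\<xi> t)"
  have "commut G0 x s \<otimes>\<^bsub>G0\<^esub> s = x \<otimes>\<^bsub>G0\<^esub> s \<otimes>\<^bsub>G0\<^esub> ?x"
    using p s by (simp add: commut_def G0.m_assoc)
  then have swap: "\<xi> s \<otimes>\<^bsub>G1\<^esub> act s ?w = act (x \<otimes>\<^bsub>G0\<^esub> s \<otimes>\<^bsub>G0\<^esub> ?x) ?w \<otimes>\<^bsub>G1\<^esub> \<xi> s"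
    using Z0_swap[OF p s s, of ?w] p t by simp
  have "inv\<^bsub>G1\<^esub> (\<xi> (s \<otimes>\<^bsub>G0\<^esub> t)) = act s ?w \<otimes>\<^bsub>G1\<^esub> inv\<^bsub>G1\<^esub> (\<xi> s)"
    using p s t by (simp add: G1.inv_mult_group)
  also have "\<dots> = inv\<^bsub>G1\<^esub> (\<xi> s) \<otimes>\<^bsub>G1\<^esub> act (x \<otimes>\<^bsub>G0\<^esub> s \<otimes>\<^bsub>G0\<^esub> ?x) ?w"
  proof -
    have "act s ?w \<otimes>\<^bsub>G1\<^esub> inv\<^bsub>G1\<^esub> (\<xi> s) =
        inv\<^bsub>G1\<^esub> (\<xi> s) \<otimes>\<^bsub>G1\<^esub> (\<xi> s \<otimes>\<^bsub>G1\<^esub> act s ?w) \<otimes>\<^bsub>G1\<^esub> inv\<^bsub>G1\<^esub> (\<xi> s)"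
      using p s t by (simp add: G1.m_assoc)
    then show ?thesis
      unfolding swap using p s t by (simp add: G1.m_assoc)
  qed
  finally have "act ?x (inv\<^bsub>G1\<^esub> (\<xi> (s \<otimes>\<^bsub>G0\<^esub> t))) =
      act ?x (inv\<^bsub>G1\<^esub> (\<xi> s)) \<otimes>\<^bsub>G1\<^esub> act s (act ?x ?w)"
    using p s t by (simp add: G0.m_assoc)
  then show "(\<lambda>t\<in>carrier G0. act ?x (inv\<^bsub>G1\<^esub> (\<xi> t))) (s \<otimes>\<^bsub>G0\<^esub> t) =
      (\<lambda>t\<in>carrier G0. act ?x (inv\<^bsub>G1\<^esub> (\<xi> t))) s \<otimes>\<^bsub>G1\<^esub>
      act s ((\<lambda>t\<in>carrier G0. act ?x (inv\<^bsub>G1\<^esub> (\<xi> t))) t)"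
    using s t by simp
qed

lemma Z0_group: "group Z"
proof (rule groupI)
  fix p q assume "p \<in> carrier Z" "q \<in> carrier Z"
  then show "p \<otimes>\<^bsub>Z\<^esub> q \<in> carrier Z"
    using Z0_mult_closed[of "fst p" "snd p" "fst q" "snd q"] by simp
next
  fix p q r assume "p \<in> carrier Z" "q \<in> carrier Z" "r \<in> carrier Z"
  then show "p \<otimes>\<^bsub>Z\<^esub> q \<otimes>\<^bsub>Z\<^esub> r = p \<otimes>\<^bsub>Z\<^esub> (q \<otimes>\<^bsub>Z\<^esub> r)"
    by (cases p, cases q, cases r) (auto simp: Z0_mult fun_eq_iff G1.m_assoc G0.m_assoc)
next
  fix p assume p: "p \<in> carrier Z"
  obtain x \<xi> where P: "p = (x, \<xi>)" by fastforce
  show "\<one>\<^bsub>Z\<^esub> \<otimes>\<^bsub>Z\<^esub> p = p"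
  proof -
    have "(\<lambda>t\<in>carrier G0. act \<one>\<^bsub>G0\<^esub> (\<xi> t) \<otimes>\<^bsub>G1\<^esub> (\<lambda>t\<in>carrier G0. \<one>\<^bsub>G1\<^esub>) t) =
        restrict \<xi> (carrier G0)"
      using p unfolding P by (intro restrict_ext) simp
    also have "\<dots> = \<xi>"
      using p unfolding P by (intro extensional_restrict Z0_extensional)
    finally show ?thesis
      using p unfolding P Z0_one Z0_mult by simp
  qed
  show "\<exists>q\<in>carrier Z. q \<otimes>\<^bsub>Z\<^esub> p = \<one>\<^bsub>Z\<^esub>"
    using p Z0_inverse_closed Z0_inverse_mult unfolding P by blast
qed (rule Z0_one_closed)

lemma Z0_fst_group_hom: "group_hom Z G0 fst"
proof -
  have "fst \<in> hom Z G0"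
  proof (rule homI)
    fix p assume "p \<in> carrier Z"
    then show "fst p \<in> carrier G0" by (cases p) simp
  next
    fix p q :: "'b \<times> ('b \<Rightarrow> 'a)"
    show "fst (p \<otimes>\<^bsub>Z\<^esub> q) = fst p \<otimes>\<^bsub>G0\<^esub> fst q" by (cases p, cases q) (simp add: Z0_mult)
  qed
  then show ?thesis
    unfolding group_hom_def group_hom_axioms_def using Z0_group G0.group_axioms by blast
qed

abbreviation \<delta> where "\<delta> \<equiv> Z0_delta G1 G0 d act"

lemma delta_eq: "\<delta> c = (d c, \<lambda>t\<in>carrier G0. c \<otimes>\<^bsub>G1\<^esub> inv\<^bsub>G1\<^esub> (act t c))"
  by (simp add: Z0_delta_def)

lemma delta_closed:
  assumes c: "c \<in> carrier G1"
  shows "\<delta> c \<in> carrier Z"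
  unfolding delta_eq Z0_mem_iff
proof (intro conjI ballI)
  show "d c \<in> carrier G0" using c by simp
  show "(\<lambda>t\<in>carrier G0. c \<otimes>\<^bsub>G1\<^esub> inv\<^bsub>G1\<^esub> (act t c)) \<in> carrier G0 \<rightarrow>\<^sub>E carrier G1"
    using c by simp
next
  fix t assume "t \<in> carrier G0"
  then show "d ((\<lambda>t\<in>carrier G0. c \<otimes>\<^bsub>G1\<^esub> inv\<^bsub>G1\<^esub> (act t c)) t) = commut G0 (d c) t"
    using c by (simp add: commut_def G0.m_assoc G0.inv_mult_group)
next
  fix a assume "a \<in> carrier G1"
  then show "(\<lambda>t\<in>carrier G0. c \<otimes>\<^bsub>G1\<^esub> inv\<^bsub>G1\<^esub> (act t c)) (d a) = act (d c) a \<otimes>\<^bsub>G1\<^esub> inv\<^bsub>G1\<^esub> a"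
    using c by (simp add: act_d G1.m_assoc G1.inv_mult_group)
next
  fix s t assume "s \<in> carrier G0" "t \<in> carrier G0"
  then show "(\<lambda>t\<in>carrier G0. c \<otimes>\<^bsub>G1\<^esub> inv\<^bsub>G1\<^esub> (act t c)) (s \<otimes>\<^bsub>G0\<^esub> t) =
      (\<lambda>t\<in>carrier G0. c \<otimes>\<^bsub>G1\<^esub> inv\<^bsub>G1\<^esub> (act t c)) s \<otimes>\<^bsub>G1\<^esub>
      act s ((\<lambda>t\<in>carrier G0. c \<otimes>\<^bsub>G1\<^esub> inv\<^bsub>G1\<^esub> (act t c)) t)"
    using c by (simp add: G1.m_assoc G1.inv_mult_group)
qed

lemma delta_mult: "a \<in> carrier G1 \<Longrightarrow> b \<in> carrier G1 \<Longrightarrow> \<delta> (a \<otimes>\<^bsub>G1\<^esub> b) = \<delta> a \<otimes>\<^bsub>Z\<^esub> \<delta> b"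
  unfolding delta_eq Z0_mult
  by (auto simp: fun_eq_iff act_d G1.m_assoc G1.inv_mult_group simp del: act_act)

lemma delta_group_hom: "group_hom G1 Z \<delta>"
proof -
  have "\<delta> \<in> hom G1 Z" by (rule homI) (simp_all add: delta_closed delta_mult)
  then show ?thesis
    unfolding group_hom_def group_hom_axioms_def using Z0_group G1.group_axioms by blast
qed

lemma Z0_apply_mult_swap:
  assumes p: "(x, \<xi>) \<in> carrier Z" and q: "(y, \<eta>) \<in> carrier Z" and t: "t \<in> carrier G0"
  shows "\<xi> (y \<otimes>\<^bsub>G0\<^esub> t) \<otimes>\<^bsub>G1\<^esub> \<eta> t = act x (\<eta> t) \<otimes>\<^bsub>G1\<^esub> \<xi> t \<otimes>\<^bsub>G1\<^esub> act t (\<xi> y)"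
proof -
  have y: "y \<in> carrier G0" using q by simp
  have "y \<otimes>\<^bsub>G0\<^esub> t = d (\<eta> t) \<otimes>\<^bsub>G0\<^esub> (t \<otimes>\<^bsub>G0\<^esub> y)"
    using q t by (simp add: G0.commut_mult_swap)
  then have "\<xi> (y \<otimes>\<^bsub>G0\<^esub> t) \<otimes>\<^bsub>G1\<^esub> \<eta> t = act x (\<eta> t) \<otimes>\<^bsub>G1\<^esub> \<xi> (t \<otimes>\<^bsub>G0\<^esub> y)"
    using Z0_apply_d_mult[OF p, of "\<eta> t" "t \<otimes>\<^bsub>G0\<^esub> y"] q t y by simp
  then show ?thesis using p q t y by (simp add: G1.m_assoc)
qed

lemma delta_apply_eq_commut:
  assumes p: "(x, \<xi>) \<in> carrier Z" and q: "(y, \<eta>) \<in> carrier Z"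
  shows "\<delta> (\<xi> y) = commut Z (x, \<xi>) (y, \<eta>)"
proof (rule group.eq_commut_of_mult[OF Z0_group])
  have y: "y \<in> carrier G0" using q by simp
  show "\<delta> (\<xi> y) \<in> carrier Z" using p y by (simp add: delta_closed)
  show "\<delta> (\<xi> y) \<otimes>\<^bsub>Z\<^esub> ((y, \<eta>) \<otimes>\<^bsub>Z\<^esub> (x, \<xi>)) = (x, \<xi>) \<otimes>\<^bsub>Z\<^esub> (y, \<eta>)"
    unfolding delta_eq Z0_mult prod.inject
  proof (intro conjI restrict_ext)
    show "d (\<xi> y) \<otimes>\<^bsub>G0\<^esub> (y \<otimes>\<^bsub>G0\<^esub> x) = x \<otimes>\<^bsub>G0\<^esub> y"
      using p y by (simp add: G0.commut_mult_swap)
  next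
    fix t assume t: "t \<in> carrier G0"
    have "act (d (\<xi> y)) (act y (\<xi> t) \<otimes>\<^bsub>G1\<^esub> \<eta> t) \<otimes>\<^bsub>G1\<^esub> (\<xi> y \<otimes>\<^bsub>G1\<^esub> inv\<^bsub>G1\<^esub> (act t (\<xi> y)))
        = \<xi> (y \<otimes>\<^bsub>G0\<^esub> t) \<otimes>\<^bsub>G1\<^esub> \<eta> t \<otimes>\<^bsub>G1\<^esub> inv\<^bsub>G1\<^esub> (act t (\<xi> y))"
      using p q y t by (simp add: act_d G1.m_assoc del: Z0_d_apply act_act)
    also have "\<dots> = act x (\<eta> t) \<otimes>\<^bsub>G1\<^esub> \<xi> t"
      using p q y t by (simp add: Z0_apply_mult_swap[OF p q t] G1.m_assoc del: Z0_apply_mult)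
    finally show "act (d (\<xi> y)) ((\<lambda>t\<in>carrier G0. act y (\<xi> t) \<otimes>\<^bsub>G1\<^esub> \<eta> t) t) \<otimes>\<^bsub>G1\<^esub>
        (\<lambda>t\<in>carrier G0. \<xi> y \<otimes>\<^bsub>G1\<^esub> inv\<^bsub>G1\<^esub> (act t (\<xi> y))) t = act x (\<eta> t) \<otimes>\<^bsub>G1\<^esub> \<xi> t"
      using t by simp
  qed
qed (use p q in simp_all)

lemma Z0_bracket_pair: "Z0_bracket (x, \<xi>) q = \<xi> (fst q)"
  by (simp add: Z0_bracket_def)

lemma Z0_bracket_closed: "p \<in> carrier Z \<Longrightarrow> q \<in> carrier Z \<Longrightarrow> Z0_bracket p q \<in> carrier G1"
  by (cases p, cases q) (simp add: Z0_bracket_pair)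

lemma delta_bracket: "p \<in> carrier Z \<Longrightarrow> q \<in> carrier Z \<Longrightarrow> \<delta> (Z0_bracket p q) = commut Z p q"
  by (cases p, cases q) (simp add: Z0_bracket_pair delta_apply_eq_commut)

lemma Z0_bracket_delta_delta: "a \<in> carrier G1 \<Longrightarrow> b \<in> carrier G1 \<Longrightarrow>
   Z0_bracket (\<delta> a) (\<delta> b) = commut G1 a b"
  by (simp add: Z0_bracket_def delta_eq act_d commut_def G1.m_assoc G1.inv_mult_group)

lemma Z0_bracket_delta_mult: "p \<in> carrier Z \<Longrightarrow> a \<in> carrier G1 \<Longrightarrow>
   Z0_bracket p (\<delta> a) \<otimes>\<^bsub>G1\<^esub> a = act (fst p) a"
  by (cases p) (simp add: Z0_bracket_pair delta_eq G1.m_assoc)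

lemma Z0_bracket_delta_left: "a \<in> carrier G1 \<Longrightarrow> p \<in> carrier Z \<Longrightarrow>
   Z0_bracket (\<delta> a) p = inv\<^bsub>G1\<^esub> (Z0_bracket p (\<delta> a))"
  by (cases p) (simp add: Z0_bracket_def delta_eq G1.inv_mult_group)

lemma Z0_bracket_mult_right:
  assumes p: "p \<in> carrier Z" and q: "q \<in> carrier Z" and r: "r \<in> carrier Z"
  shows "Z0_bracket p (q \<otimes>\<^bsub>Z\<^esub> r) = Z0_bracket p q \<otimes>\<^bsub>G1\<^esub> Z0_bracket p r \<otimes>\<^bsub>G1\<^esub>
      Z0_bracket (r \<otimes>\<^bsub>Z\<^esub> p \<otimes>\<^bsub>Z\<^esub> inv\<^bsub>Z\<^esub> r \<otimes>\<^bsub>Z\<^esub> inv\<^bsub>Z\<^esub> p) q"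
proof -
  interpret Z: group Z by (rule Z0_group)
  interpret fst: group_hom Z G0 fst by (rule Z0_fst_group_hom)
  interpret \<delta>: group_hom G1 Z \<delta> by (rule delta_group_hom)
  obtain x \<xi> where P: "p = (x, \<xi>)" by fastforce
  have y: "fst q \<in> carrier G0" and z: "fst r \<in> carrier G0" using q r by simp_all
  have "r \<otimes>\<^bsub>Z\<^esub> p \<otimes>\<^bsub>Z\<^esub> inv\<^bsub>Z\<^esub> r \<otimes>\<^bsub>Z\<^esub> inv\<^bsub>Z\<^esub> p = inv\<^bsub>Z\<^esub> (commut Z p r)"
    using Z.inv_commut[OF p r] by (simp add: commut_def)
  also have "\<dots> = \<delta> (inv\<^bsub>G1\<^esub> (\<xi> (fst r)))"
    using p r z unfolding P by (simp add: delta_bracket[symmetric] Z0_bracket_pair)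
  finally have "Z0_bracket (r \<otimes>\<^bsub>Z\<^esub> p \<otimes>\<^bsub>Z\<^esub> inv\<^bsub>Z\<^esub> r \<otimes>\<^bsub>Z\<^esub> inv\<^bsub>Z\<^esub> p) q
      = inv\<^bsub>G1\<^esub> (\<xi> (fst r)) \<otimes>\<^bsub>G1\<^esub> act (fst q) (\<xi> (fst r))"
    using p y z unfolding P by (simp add: Z0_bracket_def delta_eq)
  then show ?thesis
    using p y z unfolding P by (simp add: Z0_bracket_pair fst.hom_mult[OF q r] G1.m_assoc)
qed

lemma Z0_bracket_mult_left:
  assumes p: "p \<in> carrier Z" and q: "q \<in> carrier Z" and r: "r \<in> carrier Z"
  shows "Z0_bracket (p \<otimes>\<^bsub>Z\<^esub> q) r =
      Z0_bracket p (q \<otimes>\<^bsub>Z\<^esub> r \<otimes>\<^bsub>Z\<^esub> inv\<^bsub>Z\<^esub> q) \<otimes>\<^bsub>G1\<^esub> Z0_bracket q r"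
proof -
  interpret fst: group_hom Z G0 fst by (rule Z0_fst_group_hom)
  obtain x \<xi> where P: "p = (x, \<xi>)" by fastforce
  obtain y \<eta> where Q: "q = (y, \<eta>)" by fastforce
  obtain z \<theta> where R: "r = (z, \<theta>)" by fastforce
  have z: "z \<in> carrier G0" using r unfolding R by simp
  have "fst (q \<otimes>\<^bsub>Z\<^esub> r \<otimes>\<^bsub>Z\<^esub> inv\<^bsub>Z\<^esub> q) = d (\<eta> z) \<otimes>\<^bsub>G0\<^esub> z"
    using q r z unfolding Q R by (simp add: commut_def G0.m_assoc)
  then have "Z0_bracket p (q \<otimes>\<^bsub>Z\<^esub> r \<otimes>\<^bsub>Z\<^esub> inv\<^bsub>Z\<^esub> q) \<otimes>\<^bsub>G1\<^esub> Z0_bracket q r = act x (\<eta> z) \<otimes>\<^bsub>G1\<^esub> \<xi> z"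
    using p q z unfolding P Q R
    by (simp add: Z0_bracket_pair Z0_apply_d_mult del: Z0_d_apply Z0_apply_mult)
  then show ?thesis
    using z unfolding P Q R by (simp add: Z0_bracket_def Z0_mult)
qed

lemma delta_act:
  assumes p: "p \<in> carrier Z" and a: "a \<in> carrier G1"
  shows "\<delta> (act (fst p) a) = p \<otimes>\<^bsub>Z\<^esub> \<delta> a \<otimes>\<^bsub>Z\<^esub> inv\<^bsub>Z\<^esub> p"
proof -
  obtain x \<xi> where P: "p = (x, \<xi>)" by fastforce
  have x: "x \<in> carrier G0" using p unfolding P by simp
  have "\<delta> (act x a) \<otimes>\<^bsub>Z\<^esub> (x, \<xi>) = (x, \<xi>) \<otimes>\<^bsub>Z\<^esub> \<delta> a"
    unfolding delta_eq Z0_mult prod.inject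
  proof (intro conjI restrict_ext)
    show "d (act x a) \<otimes>\<^bsub>G0\<^esub> x = x \<otimes>\<^bsub>G0\<^esub> d a" using x a by (simp add: G0.m_assoc)
  next
    fix t assume t: "t \<in> carrier G0"
    have swap: "\<xi> t \<otimes>\<^bsub>G1\<^esub> act (t \<otimes>\<^bsub>G0\<^esub> x) (inv\<^bsub>G1\<^esub> a) = act (x \<otimes>\<^bsub>G0\<^esub> t) (inv\<^bsub>G1\<^esub> a) \<otimes>\<^bsub>G1\<^esub> \<xi> t"
      using Z0_swap[OF p[unfolded P] t _ G1.inv_closed[OF a], of "t \<otimes>\<^bsub>G0\<^esub> x"] x t
      by (simp add: G0.commut_mult_swap del: act_inv)
    have "act (d (act x a)) (\<xi> t) \<otimes>\<^bsub>G1\<^esub> (act x a \<otimes>\<^bsub>G1\<^esub> inv\<^bsub>G1\<^esub> (act t (act x a)))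
        = act x a \<otimes>\<^bsub>G1\<^esub> (\<xi> t \<otimes>\<^bsub>G1\<^esub> act (t \<otimes>\<^bsub>G0\<^esub> x) (inv\<^bsub>G1\<^esub> a))"
      using p x t a unfolding P by (simp add: act_d G1.m_assoc del: d_act)
    also have "\<dots> = act x (a \<otimes>\<^bsub>G1\<^esub> inv\<^bsub>G1\<^esub> (act t a)) \<otimes>\<^bsub>G1\<^esub> \<xi> t"
      unfolding swap using p x t a unfolding P by (simp add: G1.m_assoc)
    finally show "act (d (act x a)) (\<xi> t) \<otimes>\<^bsub>G1\<^esub>
        (\<lambda>t\<in>carrier G0. act x a \<otimes>\<^bsub>G1\<^esub> inv\<^bsub>G1\<^esub> (act t (act x a))) t =
        act x ((\<lambda>t\<in>carrier G0. a \<otimes>\<^bsub>G1\<^esub> inv\<^bsub>G1\<^esub> (act t a)) t) \<otimes>\<^bsub>G1\<^esub> \<xi> t"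
      using t by simp
  qed
  then show ?thesis
    using group.eq_conj_of_mult[OF Z0_group delta_closed[OF act_closed[OF x a]] p delta_closed[OF a]]
    unfolding P by simp
qed

end

theorem corollary3p8:
  fixes G1 :: "('a, 'm) monoid_scheme" and G0 :: "('b, 'n) monoid_scheme"
    and d :: "'a \<Rightarrow> 'b" and act :: "'b \<Rightarrow> 'a \<Rightarrow> 'a"
  assumes "crossed_module G1 G0 d act"
  shows "braided_crossed_module G1 (Z0 G1 G0 d act) (Z0_delta G1 G0 d act) Z0_bracket
    \<and> (\<forall>z\<in>carrier (Z0 G1 G0 d act). \<forall>a\<in>carrier G1.
          Z0_bracket z (Z0_delta G1 G0 d act a) \<otimes>\<^bsub>G1\<^esub> a = act (fst z) a)
    \<and> crossed_module G1 (Z0 G1 G0 d act) (Z0_delta G1 G0 d act) (\<lambda>z a. act (fst z) a)"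
proof -
  have "group G1" "group G0" using assms unfolding crossed_module_def by blast+
  then interpret xmod G1 G0 d act by (intro xmod.intro xmod_axioms.intro assms)
  interpret Z: group Z by (rule Z0_group)
  interpret fst: group_hom Z G0 fst by (rule Z0_fst_group_hom)
  interpret \<delta>: group_hom G1 Z \<delta> by (rule delta_group_hom)
  have "braided_crossed_module G1 Z \<delta> Z0_bracket"
    unfolding braided_crossed_module_def
    using G1.group_axioms Z.group_axioms \<delta>.homh Z0_bracket_closed delta_bracket
      Z0_bracket_delta_delta Z0_bracket_delta_left Z0_bracket_mult_right Z0_bracket_mult_left
    by (intro conjI ballI) assumption+
  moreover have "crossed_module G1 Z \<delta> (\<lambda>z a. act (fst z) a)"
    unfolding crossed_module_def
  proof (intro conjI ballI)
    fix b a assume "a \<in> carrier G1" "b \<in> carrier G1"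
    then show "act (fst (\<delta> b)) a = b \<otimes>\<^bsub>G1\<^esub> a \<otimes>\<^bsub>G1\<^esub> inv\<^bsub>G1\<^esub> b"
      by (simp add: delta_eq act_d)
  qed (simp_all add: G1.group_axioms Z.group_axioms \<delta>.homh fst.hom_mult delta_act)
  ultimately show ?thesis
    by (simp add: Z0_bracket_delta_mult)
qed

end
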